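(* Let $\mathcal{Y}=\{y_1,\dots,y_{n+1}\}\subset\mathbb{R}^n$ be affinely independent and $y_0\in\mathbb{R}^n$. Then the matrix $G=\sum_{i=0}^{n+1}\ell_iy_iy_i^T$ has exactly $|\mathcal{I}_+|-1$ positive eigenvalues and exactly $|\mathcal{I}_-|-1$ negative eigenvalues (counted with multiplicity).
   Context: The barycentric coordinates of $y_0\in\mathbb{R}^n$ with respect to the affinely independent set $\mathcal{Y}$ are the unique reals $\ell_1,\dots,\ell_{n+1}$ with $\sum_{i=1}^{n+1}\ell_i=1$ and $\sum_{i=1}^{n+1}\ell_iy_i=y_0$; set $\ell_0=-1$. Define $\mathcal{I}_+=\{i\in\{0,1,\dots,n+1\}:\ell_i>0\}$ and $\mathcal{I}_-=\{i\in\{0,1,\dots,n+1\}:\ell_i<0\}$ (so $0\in\mathcal{I}_-$). *)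

theory Defs
  imports "Jordan_Normal_Form.Jordan_Normal_Form"
begin

definition affinely_independent :: "nat \<Rightarrow> (nat \<Rightarrow> real vec) \<Rightarrow> nat set \<Rightarrow> bool" where
  "affinely_independent n y I \<longleftrightarrow>
     (\<forall>c :: nat \<Rightarrow> real.
        (\<Sum>i\<in>I. c i) = 0 \<and> (\<forall>a<n. (\<Sum>i\<in>I. c i * y i $ a) = 0) \<longrightarrow> (\<forall>i\<in>I. c i = 0))"

definition num_pos_eigenvalues :: "real mat \<Rightarrow> nat" where
  "num_pos_eigenvalues A = (\<Sum>x\<in>{x. x > 0 \<and> eigenvalue A x}. order x (char_poly A))"

definition num_neg_eigenvalues :: "real mat \<Rightarrow> nat" where
  "num_neg_eigenvalues A = (\<Sum>x\<in>{x. x < 0 \<and> eigenvalue A x}. order x (char_poly A))"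

end

theory Submission
  imports Defs
begin

text \<open>Since \<open>\<Sum> l\<^sub>i = 0\<close> and \<open>\<Sum> l\<^sub>i y\<^sub>i = 0\<close> (with \<open>l\<^sub>0 = -1\<close>), the quadratic form of
  \<open>G\<close> is \<open>x\<^sup>T G x = \<Sum> l\<^sub>i (y\<^sub>i\<^sup>T x - c)\<^sup>2\<close> for every constant \<open>c\<close>. Taking \<open>c = y\<^sub>j\<^sup>T x\<close> for a
  fixed \<open>j \<in> I\<^sub>+\<close>, the form is \<open>\<le> 0\<close> on the subspace where all \<open>y\<^sub>i\<^sup>T x\<close>, \<open>i \<in> I\<^sub>+\<close>, agree,
  which has codimension at most \<open>|I\<^sub>+| - 1\<close>; so \<open>G\<close> has at most \<open>|I\<^sub>+| - 1\<close> positive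
  eigenvalues, and likewise at most \<open>|I\<^sub>-| - 1\<close> negative ones. Affine independence shows that
  the kernel of \<open>G\<close> meets the subspace \<open>(y\<^sub>i - y\<^sub>0)\<^sup>T x = 0\<close> (\<open>l\<^sub>i = 0\<close>) only in \<open>0\<close>, so at
  most \<open>|I\<^sub>0|\<close> eigenvalues vanish. As \<open>|I\<^sub>+| + |I\<^sub>-| + |I\<^sub>0| = n + 2\<close>, all three bounds are
  equalities. Eigenvalues are counted through an orthogonal diagonalization of \<open>G\<close>.\<close>

section \<open>Spectral theorem for real symmetric matrices\<close>

lemma real_symmetric_mat_eigenvalue_real:
  fixes A :: "real mat"
  assumes A: "A \<in> carrier_mat n n" and sym: "transpose_mat A = A"
    and v: "v \<in> carrier_vec n" "v \<noteq> 0\<^sub>v n" "map_mat complex_of_real A *\<^sub>v v = z \<cdot>\<^sub>v v"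
  shows "cnj z = z"
proof -
  \<comment> \<open>The Hermitian form \<open>v\<^sup>H A v = z v\<^sup>H v\<close> is real and \<open>v\<^sup>H v > 0\<close>.\<close>
  define s where "s = (\<Sum>i<n. \<Sum>j<n. cnj (v$i) * complex_of_real (A$$(i,j)) * v$j)"
  define N where "N = (\<Sum>i<n. (cmod (v$i))\<^sup>2)"
  have "s = (\<Sum>i<n. cnj (v$i) * (map_mat complex_of_real A *\<^sub>v v) $ i)"
    unfolding s_def using A v(1)
    by (simp add: scalar_prod_def lessThan_atLeast0 sum_distrib_left mult.assoc)
  also have "\<dots> = z * complex_of_real N"
    unfolding N_def v(3) of_real_sum sum_distrib_left using v(1)
    by (intro sum.cong refl) (simp add: complex_norm_square mult_ac flip: of_real_power)
  finally have sz: "s = z * complex_of_real N" .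
  have "cnj s = (\<Sum>i<n. \<Sum>j<n. v$i * complex_of_real (A$$(i,j)) * cnj (v$j))"
    unfolding s_def by (simp add: cnj_sum)
  also have "\<dots> = (\<Sum>j<n. \<Sum>i<n. v$i * complex_of_real (A$$(i,j)) * cnj (v$j))"
    by (rule sum.swap)
  also have "\<dots> = s"
    unfolding s_def
  proof (intro sum.cong refl)
    fix i j assume "i \<in> {..<n}" "j \<in> {..<n}"
    then have "A$$(j,i) = A$$(i,j)" using sym A by (metis carrier_matD index_transpose_mat(1) lessThan_iff)
    then show "v$j * complex_of_real (A$$(j,i)) * cnj (v$i) = cnj (v$i) * complex_of_real (A$$(i,j)) * v$j"
      by simp
  qed
  finally have "cnj s = s" .
  obtain i0 where "i0 < n" "v$i0 \<noteq> 0" using v(1,2) by (metis eq_vecI carrier_vecD index_zero_vec)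
  then have "N > 0"
    unfolding N_def by (intro sum_pos2[of _ i0]) auto
  with \<open>cnj s = s\<close> sz show "cnj z = z" by simp
qed

lemma real_symmetric_mat_has_eigenvalue:
  fixes A :: "real mat"
  assumes A: "A \<in> carrier_mat n n" and sym: "transpose_mat A = A" and n: "n > 0"
  shows "\<exists>e. eigenvalue A e"
proof -
  let ?C = "map_mat complex_of_real A"
  have C: "?C \<in> carrier_mat n n" using A by auto
  have "degree (char_poly ?C) = n" using degree_monic_char_poly[OF C] by simp
  then obtain z where z: "poly (char_poly ?C) z = 0"
    using n fundamental_theorem_of_algebra constant_degree by (metis neq0_conv)
  then obtain v where "v \<in> carrier_vec n" "v \<noteq> 0\<^sub>v n" "?C *\<^sub>v v = z \<cdot>\<^sub>v v"
    using eigenvalue_root_char_poly[OF C] C unfolding eigenvalue_def eigenvector_def by auto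
  then have "cnj z = z" by (rule real_symmetric_mat_eigenvalue_real[OF A sym])
  then have "z = complex_of_real (Re z)" by (simp add: complex_eq_iff)
  moreover have "char_poly ?C = map_poly complex_of_real (char_poly A)"
    by (rule of_real_hom.char_poly_hom[OF A])
  ultimately have "poly (map_poly complex_of_real (char_poly A)) (complex_of_real (Re z)) = 0"
    using z by simp
  then have "poly (char_poly A) (Re z) = 0" by (simp add: of_real_hom.poly_map_poly)
  then show ?thesis using eigenvalue_root_char_poly[OF A] by blast
qed

definition householder_mat :: "nat \<Rightarrow> (nat \<Rightarrow> real) \<Rightarrow> real mat" where
  "householder_mat n u = mat n n (\<lambda>(i, j). (if i = j then 1 else 0) - 2 / (\<Sum>k<n. (u k)\<^sup>2) * u i * u j)"

lemma householder_mat_orthogonal: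
  assumes s: "(\<Sum>k<n. (u k)\<^sup>2) \<noteq> 0"
  shows "transpose_mat (householder_mat n u) * householder_mat n u = 1\<^sub>m n"
proof (rule eq_matI)
  define d where "d = (\<lambda>i j::nat. if i = j then 1 else (0::real))"
  define c where "c = 2 / (\<Sum>k<n. (u k)\<^sup>2)"
  have cs: "c * (\<Sum>k<n. (u k)\<^sup>2) = 2" using s by (simp add: c_def)
  have d_sum: "(\<Sum>k<n. d k i * f k) = f i" if "i < n" for i and f :: "nat \<Rightarrow> real"
    using that by (simp add: d_def if_distrib[where f="\<lambda>x. x * _"] sum.delta cong: if_cong)
  fix i j assume "i < dim_row (1\<^sub>m n)" and "j < dim_col (1\<^sub>m n)"
  then have i: "i < n" and j: "j < n" by auto
  have "(transpose_mat (householder_mat n u) * householder_mat n u) $$ (i,j)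
      = (\<Sum>k<n. (d k i - c * u k * u i) * (d k j - c * u k * u j))"
    using i j by (simp add: householder_mat_def scalar_prod_def lessThan_atLeast0 c_def d_def cong: if_cong)
  also have "\<dots> = (\<Sum>k<n. d k i * d k j) - c * u j * (\<Sum>k<n. d k i * u k)
      - c * u i * (\<Sum>k<n. d k j * u k) + c * c * u i * u j * (\<Sum>k<n. (u k)\<^sup>2)"
    by (simp add: algebra_simps sum.distrib sum_subtractf sum_distrib_left power2_eq_square)
  also have "\<dots> = d i j - 2 * c * u i * u j + c * (c * (\<Sum>k<n. (u k)\<^sup>2)) * u i * u j"
    using d_sum[OF i] d_sum[OF j] by simp
  also have "\<dots> = 1\<^sub>m n $$ (i,j)" using i j by (simp add: cs d_def)
  finally show "(transpose_mat (householder_mat n u) * householder_mat n u) $$ (i,j) = 1\<^sub>m n $$ (i,j)" .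
qed (auto simp: householder_mat_def)

lemma orthogonal_mat_with_first_col:
  fixes v :: "real vec"
  assumes v: "v \<in> carrier_vec n" and v1: "v \<bullet> v = 1" and n: "n > 0"
  shows "\<exists>W \<in> carrier_mat n n. transpose_mat W * W = 1\<^sub>m n \<and> col W 0 = v"
proof -
  have vv: "(\<Sum>k<n. (v$k)\<^sup>2) = 1"
    using v1 v by (simp add: scalar_prod_def power2_eq_square lessThan_atLeast0)
  show ?thesis
  proof (cases "v $ 0 = 1")
    case True
    have "v $ i = 0" if "i < n" "i \<noteq> 0" for i
    proof -
      have "(\<Sum>k\<in>{0,i}. (v$k)\<^sup>2) \<le> (\<Sum>k<n. (v$k)\<^sup>2)"
        using that n by (intro sum_mono2) auto
      then show ?thesis using that True vv by simp
    qed
    then show ?thesis using v True by (intro bexI[of _ "1\<^sub>m n"]) (auto intro!: eq_vecI)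
  next
    case False
    \<comment> \<open>The reflection in the hyperplane orthogonal to \<open>u = v - e\<^sub>0\<close> swaps \<open>e\<^sub>0\<close> and \<open>v\<close>.\<close>
    define u where "u i = v $ i - (if i = 0 then 1 else 0)" for i
    obtain m where m: "n = Suc m" using n gr0_implies_Suc by blast
    have "(\<Sum>k<n. (u k)\<^sup>2) = (\<Sum>k<n. (v$k)\<^sup>2) - 2 * v $ 0 + 1"
      unfolding m sum.lessThan_Suc_shift u_def by (simp add: power2_eq_square algebra_simps)
    then have s: "(\<Sum>k<n. (u k)\<^sup>2) = 2 - 2 * v $ 0" using vv by simp
    then have "(\<Sum>k<n. (u k)\<^sup>2) \<noteq> 0" using False by simp
    moreover have "col (householder_mat n u) 0 = v"
    proof (rule eq_vecI)
      fix i assume "i < dim_vec v"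
      then have i: "i < n" using v by simp
      have "2 / (\<Sum>k<n. (u k)\<^sup>2) * u 0 = -1" using False unfolding s by (simp add: u_def field_simps)
      moreover have "col (householder_mat n u) 0 $ i = (if i = 0 then 1 else 0) - 2 / (\<Sum>k<n. (u k)\<^sup>2) * u 0 * u i"
        using i n by (simp add: householder_mat_def mult_ac)
      ultimately show "col (householder_mat n u) 0 $ i = v $ i" by (simp add: u_def)
    qed (use v in \<open>simp add: householder_mat_def\<close>)
    moreover have "householder_mat n u \<in> carrier_mat n n" by (simp add: householder_mat_def)
    ultimately show ?thesis using householder_mat_orthogonal by blast
  qed
qed

lemma transpose_mult_congruence:
  fixes W E X :: "'a::comm_semiring_1 mat"
  assumes "W \<in> carrier_mat n n" "E \<in> carrier_mat n n" "X \<in> carrier_mat n n"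
  shows "transpose_mat (W * E) * X * (W * E) = transpose_mat E * (transpose_mat W * X * W) * E"
  using assms by (simp add: transpose_mult[OF assms(1,2)] assoc_mult_mat[of _ n n _ n _ n])

lemma transpose_congruence_symmetric:
  fixes W A :: "'a::comm_semiring_1 mat"
  assumes W: "W \<in> carrier_mat n n" and A: "A \<in> carrier_mat n n" and sym: "transpose_mat A = A"
  shows "transpose_mat (transpose_mat W * A * W) = transpose_mat W * A * W"
proof -
  have WT: "transpose_mat W \<in> carrier_mat n n" using W by simp
  have "transpose_mat (transpose_mat W * A * W) = transpose_mat W * transpose_mat (transpose_mat W * A)"
    using WT A W by (simp only: transpose_mult[of _ n n] transpose_transpose mult_carrier_mat)
  also have "transpose_mat (transpose_mat W * A) = A * W"
    using WT A sym by (simp only: transpose_mult[OF WT A] transpose_transpose)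
  finally show ?thesis using assoc_mult_mat[OF WT A W] by simp
qed

lemma block_diagonal_congruence:
  fixes A B Q :: "'a::comm_semiring_1 mat"
  assumes A: "A \<in> carrier_mat m m" and B: "B \<in> carrier_mat n n" and Q: "Q \<in> carrier_mat n n"
  shows "transpose_mat (four_block_mat (1\<^sub>m m) (0\<^sub>m m n) (0\<^sub>m n m) Q)
      * four_block_mat A (0\<^sub>m m n) (0\<^sub>m n m) B * four_block_mat (1\<^sub>m m) (0\<^sub>m m n) (0\<^sub>m n m) Q
    = four_block_mat A (0\<^sub>m m n) (0\<^sub>m n m) (transpose_mat Q * B * Q)"
proof -
  have QT: "transpose_mat Q \<in> carrier_mat n n" using Q by simp
  have "transpose_mat (four_block_mat (1\<^sub>m m) (0\<^sub>m m n) (0\<^sub>m n m) Q)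
      = four_block_mat (1\<^sub>m m) (0\<^sub>m m n) (0\<^sub>m n m) (transpose_mat Q)"
    using Q by (subst transpose_four_block_mat) auto
  then have "transpose_mat (four_block_mat (1\<^sub>m m) (0\<^sub>m m n) (0\<^sub>m n m) Q) * four_block_mat A (0\<^sub>m m n) (0\<^sub>m n m) B
      = four_block_mat A (0\<^sub>m m n) (0\<^sub>m n m) (transpose_mat Q * B)"
    using A B QT by (simp add: mult_four_block_mat[OF one_carrier_mat zero_carrier_mat zero_carrier_mat QT
          A zero_carrier_mat zero_carrier_mat B])
  moreover have QTB: "transpose_mat Q * B \<in> carrier_mat n n" using B QT by simp
  ultimately show ?thesis
    using A Q by (simp add: mult_four_block_mat[OF A zero_carrier_mat zero_carrier_mat QTB
          one_carrier_mat zero_carrier_mat zero_carrier_mat Q] right_mult_zero_mat[OF QTB])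
qed

lemma diagonal_mat_four_block:
  assumes "A \<in> carrier_mat m m" "D \<in> carrier_mat n n" "diagonal_mat A" "diagonal_mat D"
  shows "diagonal_mat (four_block_mat A (0\<^sub>m m n) (0\<^sub>m n m) D)"
  using assms unfolding diagonal_mat_def by auto

lemma symmetric_mat_col0_block:
  fixes A :: "'a::semiring_1 mat"
  assumes A: "A \<in> carrier_mat (Suc n) (Suc n)" and sym: "transpose_mat A = A"
    and col0: "col A 0 = e \<cdot>\<^sub>v unit_vec (Suc n) 0"
  shows "A = four_block_mat (mat 1 1 (\<lambda>_. e)) (0\<^sub>m 1 n) (0\<^sub>m n 1) (mat n n (\<lambda>(i,j). A $$ (Suc i, Suc j)))"
proof (rule eq_matI)
  have A_sym: "A $$ (i,j) = A $$ (j,i)" if "i < Suc n" "j < Suc n" for i j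
    using arg_cong[OF sym, of "\<lambda>M. M $$ (i,j)"] that A by simp
  have A_col0: "A $$ (i,0) = (if i = 0 then e else 0)" if "i < Suc n" for i
    using arg_cong[OF col0, of "\<lambda>v. v $ i"] that A by simp
  fix i j assume "i < dim_row (four_block_mat (mat 1 1 (\<lambda>_. e)) (0\<^sub>m 1 n) (0\<^sub>m n 1) (mat n n (\<lambda>(i,j). A $$ (Suc i, Suc j))))"
    "j < dim_col (four_block_mat (mat 1 1 (\<lambda>_. e)) (0\<^sub>m 1 n) (0\<^sub>m n 1) (mat n n (\<lambda>(i,j). A $$ (Suc i, Suc j))))"
  then have i: "i < Suc n" and j: "j < Suc n" by auto
  show "A $$ (i,j) = four_block_mat (mat 1 1 (\<lambda>_. e)) (0\<^sub>m 1 n) (0\<^sub>m n 1) (mat n n (\<lambda>(i,j). A $$ (Suc i, Suc j))) $$ (i,j)"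
    using i j A_col0[OF i] A_col0[OF j] A_sym[OF i j] by (cases i; cases j) auto
qed (use A in auto)

lemma symmetric_mat_deflation:
  fixes A :: "real mat"
  assumes A: "A \<in> carrier_mat (Suc n) (Suc n)" and sym: "transpose_mat A = A" and e: "eigenvalue A e"
  obtains W B where "W \<in> carrier_mat (Suc n) (Suc n)" "transpose_mat W * W = 1\<^sub>m (Suc n)"
    "transpose_mat B = B"
    "transpose_mat W * A * W = four_block_mat (mat 1 1 (\<lambda>_. e)) (0\<^sub>m 1 n) (0\<^sub>m n 1) B"
proof -
  obtain u where u: "u \<in> carrier_vec (Suc n)" "u \<noteq> 0\<^sub>v (Suc n)" "A *\<^sub>v u = e \<cdot>\<^sub>v u"
    using e A unfolding eigenvalue_def eigenvector_def by auto
  have "u \<bullet> u > 0" using conjugate_square_greater_0_vec[OF u(1)] u(2) by simp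
  define v where "v = (1 / sqrt (u \<bullet> u)) \<cdot>\<^sub>v u"
  have v: "v \<in> carrier_vec (Suc n)" "v \<bullet> v = 1" "A *\<^sub>v v = e \<cdot>\<^sub>v v"
    unfolding v_def using u A \<open>u \<bullet> u > 0\<close>
    by (simp_all add: real_sqrt_mult[symmetric] mult_mat_vec smult_smult_assoc mult.commute)
  obtain W where W: "W \<in> carrier_mat (Suc n) (Suc n)" and WW: "transpose_mat W * W = 1\<^sub>m (Suc n)"
    and Wv: "col W 0 = v"
    using orthogonal_mat_with_first_col[OF v(1,2)] by auto
  define A' where "A' = transpose_mat W * A * W"
  have A': "A' \<in> carrier_mat (Suc n) (Suc n)" using W A by (simp add: A'_def)
  have WT: "transpose_mat W \<in> carrier_mat (Suc n) (Suc n)" and AW: "A * W \<in> carrier_mat (Suc n) (Suc n)"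
    using W A by auto
  have "col (A * W) 0 = e \<cdot>\<^sub>v v"
    using col_mult2[OF A W, of 0] Wv v(3) by simp
  then have "col A' 0 = transpose_mat W *\<^sub>v (e \<cdot>\<^sub>v col W 0)"
    unfolding A'_def assoc_mult_mat[OF WT A W] Wv using col_mult2[OF WT AW, of 0] by simp
  also have "\<dots> = e \<cdot>\<^sub>v (transpose_mat W *\<^sub>v col W 0)"
    using WT Wv v(1) by (simp add: mult_mat_vec)
  also have "transpose_mat W *\<^sub>v col W 0 = col (transpose_mat W * W) 0"
    using col_mult2[OF WT W, of 0] by simp
  finally have "col A' 0 = e \<cdot>\<^sub>v unit_vec (Suc n) 0" unfolding WW by simp
  moreover have symA': "transpose_mat A' = A'"
    unfolding A'_def by (rule transpose_congruence_symmetric[OF W A sym])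
  ultimately have "A' = four_block_mat (mat 1 1 (\<lambda>_. e)) (0\<^sub>m 1 n) (0\<^sub>m n 1) (mat n n (\<lambda>(i,j). A' $$ (Suc i, Suc j)))"
    using symmetric_mat_col0_block A' by blast
  moreover have "A' $$ (i,j) = A' $$ (j,i)" if "i < Suc n" "j < Suc n" for i j
    using arg_cong[OF symA', of "\<lambda>M. M $$ (j,i)"] that A' by simp
  then have "transpose_mat (mat n n (\<lambda>(i,j). A' $$ (Suc i, Suc j))) = mat n n (\<lambda>(i,j). A' $$ (Suc i, Suc j))"
    by (intro eq_matI) auto
  ultimately show ?thesis using that W WW unfolding A'_def by blast
qed

lemma symmetric_mat_orthogonal_diagonalization:
  fixes A :: "real mat"
  assumes "A \<in> carrier_mat n n" "transpose_mat A = A"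
  shows "\<exists>P \<in> carrier_mat n n. transpose_mat P * P = 1\<^sub>m n \<and> diagonal_mat (transpose_mat P * A * P)"
  using assms
proof (induction n arbitrary: A)
  case 0
  then show ?case by (intro bexI[of _ "1\<^sub>m 0"]) (auto simp: diagonal_mat_def)
next
  case (Suc n)
  note A = Suc.prems(1) and sym = Suc.prems(2)
  obtain e where "eigenvalue A e" using real_symmetric_mat_has_eigenvalue[OF A sym] by auto
  then obtain W B where W: "W \<in> carrier_mat (Suc n) (Suc n)" and WW: "transpose_mat W * W = 1\<^sub>m (Suc n)"
    and symB: "transpose_mat B = B"
    and WAW: "transpose_mat W * A * W = four_block_mat (mat 1 1 (\<lambda>_. e)) (0\<^sub>m 1 n) (0\<^sub>m n 1) B"
    (is "_ = four_block_mat ?e _ _ B")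
    using symmetric_mat_deflation[OF A sym] by metis
  have B: "B \<in> carrier_mat n n"
    using arg_cong[OF WAW, of dim_row] arg_cong[OF WAW, of dim_col] W A by auto
  obtain Q where Q: "Q \<in> carrier_mat n n" "transpose_mat Q * Q = 1\<^sub>m n"
    and QBQ: "diagonal_mat (transpose_mat Q * B * Q)"
    using Suc.IH[OF B symB] by auto
  define E where "E = four_block_mat (1\<^sub>m 1) (0\<^sub>m 1 n) (0\<^sub>m n 1) Q"
  have E: "E \<in> carrier_mat (Suc n) (Suc n)"
    using four_block_carrier_mat[of "1\<^sub>m 1" 1 1 Q n n] Q by (simp add: E_def)
  have "transpose_mat (W * E) * (W * E) = transpose_mat E * (transpose_mat W * 1\<^sub>m (Suc n) * W) * E"
    using transpose_mult_congruence[OF W E one_carrier_mat] W E by simp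
  also have "\<dots> = transpose_mat E * four_block_mat (1\<^sub>m 1) (0\<^sub>m 1 n) (0\<^sub>m n 1) (1\<^sub>m n) * E"
    using W WW by simp
  also have "\<dots> = 1\<^sub>m (Suc n)"
    unfolding E_def block_diagonal_congruence[OF one_carrier_mat one_carrier_mat Q(1)] using Q by simp
  finally have orth: "transpose_mat (W * E) * (W * E) = 1\<^sub>m (Suc n)" .
  have "transpose_mat (W * E) * A * (W * E) = transpose_mat E * four_block_mat ?e (0\<^sub>m 1 n) (0\<^sub>m n 1) B * E"
    unfolding transpose_mult_congruence[OF W E A] WAW ..
  also have "\<dots> = four_block_mat ?e (0\<^sub>m 1 n) (0\<^sub>m n 1) (transpose_mat Q * B * Q)"
    unfolding E_def by (rule block_diagonal_congruence[OF _ B Q(1)]) auto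
  finally have "diagonal_mat (transpose_mat (W * E) * A * (W * E))"
    using Q QBQ B by (auto intro!: diagonal_mat_four_block simp: diagonal_mat_def)
  with orth show ?case using W E by (intro bexI[of _ "W * E"]) auto
qed

section \<open>Eigenvalue multiplicities of a diagonalized matrix\<close>

lemma order_prod_linear_factors:
  fixes x :: "'a::idom"
  shows "order x (\<Prod>a\<leftarrow>es. [:- a, 1:]) = count_list es x"
proof -
  have "order x (\<Prod>a\<leftarrow>es. [:- a, 1:]) = (\<Sum>a\<leftarrow>es. order x [:- a, 1:])"
    by (subst order_prod_list) (auto simp: o_def)
  also have "\<dots> = count_list es x"
    by (induction es) (simp_all add: order_linear')
  finally show ?thesis .
qed

lemma sum_count_list_filter:
  "(\<Sum>x\<in>{x. Q x \<and> x \<in> set xs}. count_list xs x) = length (filter Q xs)"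
proof -
  have "(\<Sum>x\<in>{x. Q x \<and> x \<in> set xs}. count_list xs x)
      = (\<Sum>x\<in>{x. Q x \<and> x \<in> set xs}. count_list (filter Q xs) x)"
    unfolding count_list_eq_length_filter
    by (intro sum.cong refl) (auto intro!: arg_cong[where f=length] filter_cong)
  also have "\<dots> = length (filter Q xs)"
    by (rule sum_count_set) auto
  finally show ?thesis .
qed

lemma sum_order_char_poly_similar_upper_triangular:
  fixes G D :: "'a::field mat"
  assumes sim: "similar_mat G D" and D: "D \<in> carrier_mat n n" and ut: "upper_triangular D"
  shows "(\<Sum>x\<in>{x. Q x \<and> eigenvalue G x}. order x (char_poly G)) = card {k. k < n \<and> Q (D $$ (k,k))}"
proof -
  obtain m P P' where "{G, D, P, P'} \<subseteq> carrier_mat m m" using similar_matD[OF sim] by blast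
  with D have G: "G \<in> carrier_mat n n" by auto
  have cp: "char_poly G = (\<Prod>a\<leftarrow>diag_mat D. [:- a, 1:])"
    using char_poly_similar[OF sim] char_poly_upper_triangular[OF D ut] by simp
  have "{x. Q x \<and> eigenvalue G x} = {x. Q x \<and> x \<in> set (diag_mat D)}"
    unfolding eigenvalue_root_char_poly[OF G] cp poly_prod_list_zero_iff by auto
  then have "(\<Sum>x\<in>{x. Q x \<and> eigenvalue G x}. order x (char_poly G)) = length (filter Q (diag_mat D))"
    unfolding cp order_prod_linear_factors using sum_count_list_filter[of "diag_mat D" Q] by simp
  also have "\<dots> = card {k. k < n \<and> Q (D $$ (k,k))}"
    unfolding length_filter_conv_card diag_mat_def using D by (intro arg_cong[where f=card]) auto
  finally show ?thesis .
qed

lemma similar_mat_orthogonal_congruence: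
  fixes G P :: "'a::field mat"
  assumes G: "G \<in> carrier_mat n n" and P: "P \<in> carrier_mat n n" and PP: "transpose_mat P * P = 1\<^sub>m n"
  shows "similar_mat G (transpose_mat P * G * P)"
proof -
  have PT: "transpose_mat P \<in> carrier_mat n n" using P by simp
  have PP': "P * transpose_mat P = 1\<^sub>m n" by (rule mat_mult_left_right_inverse[OF PT P PP])
  have "P * (transpose_mat P * G * P) * transpose_mat P = (P * transpose_mat P) * G * (P * transpose_mat P)"
    using P G by (simp add: assoc_mult_mat[of _ n n _ n _ n])
  then have "G = P * (transpose_mat P * G * P) * transpose_mat P"
    using G unfolding PP' by simp
  then have "similar_mat_wit G (transpose_mat P * G * P) P (transpose_mat P)"
    using G P PT PP PP' by (intro similar_mat_witI[of _ _ n]) auto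
  then show ?thesis unfolding similar_mat_def by blast
qed

section \<open>Inertia bounds\<close>

lemma exists_nonzero_orthogonal_vec:
  fixes S :: "real vec set"
  assumes fin: "finite S" and S: "S \<subseteq> carrier_vec n" and card: "card S < n"
  shows "\<exists>w \<in> carrier_vec n. w \<noteq> 0\<^sub>v n \<and> (\<forall>s\<in>S. s \<bullet> w = 0)"
proof -
  obtain xs where xs: "set xs = S" "distinct xs" using finite_distinct_list[OF fin] by auto
  have len: "length xs = card S" using xs distinct_card by fastforce
  \<comment> \<open>Since \<open>card S < n\<close>, the elements of \<open>S\<close> padded with zero rows form a singular matrix.\<close>
  define c where "c = (\<lambda>i. if i < length xs then xs ! i else 0\<^sub>v n)"
  have c: "c \<in> {0..<n} \<rightarrow> carrier_vec n" using S xs nth_mem unfolding c_def by fastforce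
  define M where "M = mat\<^sub>r n n (\<lambda>i. if i = n - 1 then 0\<^sub>v n else c i)"
  have M: "M \<in> carrier_mat n n" by (simp add: M_def)
  have "det M = 0" unfolding M_def by (rule det_row_0[OF _ c]) (use card in simp)
  then obtain w where w: "w \<in> carrier_vec n" "w \<noteq> 0\<^sub>v n" "M *\<^sub>v w = 0\<^sub>v n"
    using det_0_iff_vec_prod_zero_field[OF M] by auto
  have "s \<bullet> w = 0" if s: "s \<in> S" for s
  proof -
    obtain i where i: "i < length xs" "s = xs ! i" using s xs by (metis in_set_conv_nth)
    have i': "i < n" "i \<noteq> n - 1" using i len card by auto
    have "row M i = s" unfolding M_def using i i' s S by (auto simp: c_def)
    then show ?thesis using arg_cong[OF w(3), of "\<lambda>v. v $ i"] i' M by simp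
  qed
  then show ?thesis using w by blast
qed

lemma exists_supported_vec_orthogonal:
  fixes P :: "real mat"
  assumes P: "P \<in> carrier_mat n n" and K: "K \<subseteq> {..<n}" and F: "finite F" "F \<subseteq> carrier_vec n"
    and lt: "card F < card K"
  shows "\<exists>w \<in> carrier_vec n. w \<noteq> 0\<^sub>v n \<and> (\<forall>k<n. k \<notin> K \<longrightarrow> w$k = 0) \<and> (\<forall>f\<in>F. f \<bullet> (P *\<^sub>v w) = 0)"
proof -
  define S where "S = (\<lambda>f. transpose_mat P *\<^sub>v f) ` F \<union> (\<lambda>k. unit_vec n k) ` ({..<n} - K)"
  have finK: "finite K" using K finite_subset by blast
  have "card S \<le> card F + card ({..<n} - K)"
    unfolding S_def by (intro card_Un_le[THEN order.trans] add_mono card_image_le) (use F in auto)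
  also have "card ({..<n} - K) = n - card K" using K finK by (simp add: card_Diff_subset)
  finally have "card S < n" using lt K card_mono[OF _ K] by fastforce
  moreover have "finite S" "S \<subseteq> carrier_vec n" using F P unfolding S_def by auto
  ultimately obtain w where w: "w \<in> carrier_vec n" "w \<noteq> 0\<^sub>v n" "\<forall>s\<in>S. s \<bullet> w = 0"
    using exists_nonzero_orthogonal_vec by blast
  have "w $ k = 0" if "k < n" "k \<notin> K" for k
    using w(3) scalar_prod_left_unit[OF w(1) that(1)] that unfolding S_def by auto
  moreover have "f \<bullet> (P *\<^sub>v w) = 0" if "f \<in> F" for f
    using w(3) transpose_vec_mult_scalar[OF P w(1), of f] that F unfolding S_def by auto
  ultimately show ?thesis using w by blast
qed

locale orthogonal_diagonalization =
  fixes G P :: "real mat" and n :: nat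
  assumes G: "G \<in> carrier_mat n n" and P: "P \<in> carrier_mat n n"
    and orthogonal: "transpose_mat P * P = 1\<^sub>m n"
    and diagonal: "diagonal_mat (transpose_mat P * G * P)"
begin

definition D :: "real mat" where
  "D = transpose_mat P * G * P"

definition eigval :: "nat \<Rightarrow> real" where
  "eigval k = D $$ (k,k)"

lemma D_carrier: "D \<in> carrier_mat n n"
  using G P by (simp add: D_def)

lemma sum_order_char_poly:
  "(\<Sum>x\<in>{x. Q x \<and> eigenvalue G x}. order x (char_poly G)) = card {k. k < n \<and> Q (eigval k)}"
  unfolding eigval_def
proof (rule sum_order_char_poly_similar_upper_triangular[OF _ D_carrier])
  show "similar_mat G D"
    unfolding D_def by (rule similar_mat_orthogonal_congruence[OF G P orthogonal])
  show "upper_triangular D"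
    using diagonal D_carrier unfolding D_def diagonal_mat_def upper_triangular_def by auto
qed

lemma congruence_mult_vec:
  assumes w: "w \<in> carrier_vec n"
  shows "transpose_mat P *\<^sub>v (G *\<^sub>v (P *\<^sub>v w)) = vec n (\<lambda>k. eigval k * w $ k)"
proof -
  have "transpose_mat P *\<^sub>v (G *\<^sub>v (P *\<^sub>v w)) = D *\<^sub>v w"
    unfolding D_def using G P w by (simp add: assoc_mult_mat_vec[of _ n n _ n])
  also have "\<dots> = vec n (\<lambda>k. eigval k * w $ k)"
  proof (rule eq_vecI)
    fix k assume "k < dim_vec (vec n (\<lambda>k. eigval k * w $ k))"
    then have k: "k < n" by simp
    have "(D *\<^sub>v w) $ k = (\<Sum>j\<in>{0..<n}. D $$ (k,j) * w $ j)"
      using D_carrier w k by (simp add: scalar_prod_def)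
    also have "\<dots> = eigval k * w $ k"
      using diagonal D_carrier k unfolding diagonal_mat_def eigval_def D_def[symmetric]
      by (subst sum.remove[of _ k]) (auto intro!: sum.neutral)
    finally show "(D *\<^sub>v w) $ k = vec n (\<lambda>k. eigval k * w $ k) $ k"
      using k by simp
  qed (use D_carrier in simp)
  finally show ?thesis .
qed

lemma quadratic_form:
  assumes w: "w \<in> carrier_vec n"
  shows "(P *\<^sub>v w) \<bullet> (G *\<^sub>v (P *\<^sub>v w)) = (\<Sum>k<n. eigval k * (w $ k)\<^sup>2)"
proof -
  have Pw: "P *\<^sub>v w \<in> carrier_vec n" and GPw: "G *\<^sub>v (P *\<^sub>v w) \<in> carrier_vec n"
    using G P w by auto
  have "(P *\<^sub>v w) \<bullet> (G *\<^sub>v (P *\<^sub>v w)) = (transpose_mat P *\<^sub>v (G *\<^sub>v (P *\<^sub>v w))) \<bullet> w"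
    using comm_scalar_prod[OF Pw GPw] transpose_vec_mult_scalar[OF P w GPw] by simp
  also have "\<dots> = (\<Sum>k<n. eigval k * (w $ k)\<^sup>2)"
    unfolding congruence_mult_vec[OF w]
    using w by (simp add: scalar_prod_def lessThan_atLeast0 power2_eq_square mult.assoc)
  finally show ?thesis .
qed

text \<open>If more than \<open>card F\<close> eigenvalues had \<open>\<sigma> \<lambda> > 0\<close>, a nonzero combination of their
  eigenvectors orthogonal to \<open>F\<close> would make \<open>\<sigma> x\<^sup>T G x\<close> positive.\<close>

lemma card_sign_eigval_le:
  assumes F: "finite F" "F \<subseteq> carrier_vec n"
    and semidef: "\<And>x. x \<in> carrier_vec n \<Longrightarrow> (\<forall>f\<in>F. f \<bullet> x = 0) \<Longrightarrow> \<sigma> * (x \<bullet> (G *\<^sub>v x)) \<le> 0"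
  shows "card {k. k < n \<and> \<sigma> * eigval k > 0} \<le> card F"
proof (rule ccontr)
  define K where "K = {k. k < n \<and> \<sigma> * eigval k > 0}"
  assume "\<not> card K \<le> card F"
  then have "card F < card K" by simp
  moreover have "K \<subseteq> {..<n}" unfolding K_def by auto
  ultimately obtain w where w: "w \<in> carrier_vec n" "w \<noteq> 0\<^sub>v n" "\<forall>k<n. k \<notin> K \<longrightarrow> w$k = 0"
    and orth: "\<forall>f\<in>F. f \<bullet> (P *\<^sub>v w) = 0"
    using exists_supported_vec_orthogonal[OF P _ F] by blast
  obtain k0 where k0: "k0 < n" "w $ k0 \<noteq> 0" using w(1,2) by (metis eq_vecI carrier_vecD index_zero_vec)
  with w(3) have "k0 \<in> K" by blast
  have "0 < \<sigma> * eigval k0 * (w $ k0)\<^sup>2"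
    using \<open>k0 \<in> K\<close> k0 unfolding K_def by simp
  also have "\<dots> \<le> (\<Sum>k<n. \<sigma> * eigval k * (w $ k)\<^sup>2)"
    using w(3) k0 unfolding K_def by (intro member_le_sum) (auto simp: not_less mult_nonpos_nonneg)
  also have "\<dots> = \<sigma> * ((P *\<^sub>v w) \<bullet> (G *\<^sub>v (P *\<^sub>v w)))"
    unfolding quadratic_form[OF w(1)] by (simp add: sum_distrib_left mult.assoc)
  also have "\<dots> \<le> 0"
    using semidef orth P w(1) by simp
  finally show False by simp
qed

lemma card_zero_eigval_le:
  assumes F: "finite F" "F \<subseteq> carrier_vec n"
    and kernel: "\<And>x. x \<in> carrier_vec n \<Longrightarrow> G *\<^sub>v x = 0\<^sub>v n \<Longrightarrow> (\<forall>f\<in>F. f \<bullet> x = 0) \<Longrightarrow> x = 0\<^sub>v n"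
  shows "card {k. k < n \<and> eigval k = 0} \<le> card F"
proof (rule ccontr)
  define K where "K = {k. k < n \<and> eigval k = 0}"
  assume "\<not> card K \<le> card F"
  then have "card F < card K" by simp
  moreover have "K \<subseteq> {..<n}" unfolding K_def by auto
  ultimately obtain w where w: "w \<in> carrier_vec n" "w \<noteq> 0\<^sub>v n" "\<forall>k<n. k \<notin> K \<longrightarrow> w$k = 0"
    and orth: "\<forall>f\<in>F. f \<bullet> (P *\<^sub>v w) = 0"
    using exists_supported_vec_orthogonal[OF P _ F] by blast
  have PT: "transpose_mat P \<in> carrier_mat n n" using P by simp
  have PP': "P * transpose_mat P = 1\<^sub>m n" by (rule mat_mult_left_right_inverse[OF PT P orthogonal])
  have Pw: "P *\<^sub>v w \<in> carrier_vec n" using P w by simp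
  have "G *\<^sub>v (P *\<^sub>v w) = (P * transpose_mat P) *\<^sub>v (G *\<^sub>v (P *\<^sub>v w))"
    using G Pw unfolding PP' by simp
  also have "\<dots> = P *\<^sub>v (transpose_mat P *\<^sub>v (G *\<^sub>v (P *\<^sub>v w)))"
    using G P Pw by (simp add: assoc_mult_mat_vec[of _ n n _ n])
  also have "transpose_mat P *\<^sub>v (G *\<^sub>v (P *\<^sub>v w)) = 0\<^sub>v n"
    unfolding congruence_mult_vec[OF w(1)] using w(3) unfolding K_def by (intro eq_vecI) auto
  also have "P *\<^sub>v 0\<^sub>v n = 0\<^sub>v n"
    using P by (intro eq_vecI) auto
  finally have "P *\<^sub>v w = 0\<^sub>v n"
    using kernel[OF Pw _ orth] by simp
  then have "transpose_mat P *\<^sub>v (P *\<^sub>v w) = 0\<^sub>v n"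
    using PT by (intro eq_vecI) auto
  then have "w = 0\<^sub>v n"
    using assoc_mult_mat_vec[OF PT P w(1)] orthogonal w(1) by simp
  with w(2) show False ..
qed

end

lemma orthogonal_diagonalization_exists:
  assumes "G \<in> carrier_mat n n" "transpose_mat G = G"
  obtains P where "orthogonal_diagonalization G P n"
  using symmetric_mat_orthogonal_diagonalization[OF assms] assms
  unfolding orthogonal_diagonalization_def by blast

lemma card_sign_partition:
  fixes f :: "'a \<Rightarrow> 'b::linorder"
  assumes "finite X"
  shows "card {x\<in>X. f x > c} + card {x\<in>X. f x < c} + card {x\<in>X. f x = c} = card X"
proof -
  have "card X = card ({x\<in>X. f x > c} \<union> ({x\<in>X. f x < c} \<union> {x\<in>X. f x = c}))"
    by (rule arg_cong[where f=card]) auto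
  also have "\<dots> = card {x\<in>X. f x > c} + card ({x\<in>X. f x < c} \<union> {x\<in>X. f x = c})"
    by (rule card_Un_disjoint) (use assms in auto)
  also have "card ({x\<in>X. f x < c} \<union> {x\<in>X. f x = c}) = card {x\<in>X. f x < c} + card {x\<in>X. f x = c}"
    by (rule card_Un_disjoint) (use assms in auto)
  finally show ?thesis by simp
qed

lemma num_pos_eigenvalues_le_codim:
  fixes G :: "real mat"
  assumes G: "G \<in> carrier_mat n n" "transpose_mat G = G" and F: "finite F" "F \<subseteq> carrier_vec n"
    and nonpos: "\<And>x. x \<in> carrier_vec n \<Longrightarrow> (\<forall>f\<in>F. f \<bullet> x = 0) \<Longrightarrow> x \<bullet> (G *\<^sub>v x) \<le> 0"
  shows "num_pos_eigenvalues G \<le> card F"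
proof -
  obtain P where "orthogonal_diagonalization G P n" using orthogonal_diagonalization_exists[OF G] .
  then interpret orthogonal_diagonalization G P n .
  show ?thesis
    using card_sign_eigval_le[OF F, of 1] nonpos
    unfolding num_pos_eigenvalues_def sum_order_char_poly by simp
qed

lemma num_neg_eigenvalues_le_codim:
  fixes G :: "real mat"
  assumes G: "G \<in> carrier_mat n n" "transpose_mat G = G" and F: "finite F" "F \<subseteq> carrier_vec n"
    and nonneg: "\<And>x. x \<in> carrier_vec n \<Longrightarrow> (\<forall>f\<in>F. f \<bullet> x = 0) \<Longrightarrow> x \<bullet> (G *\<^sub>v x) \<ge> 0"
  shows "num_neg_eigenvalues G \<le> card F"
proof -
  obtain P where "orthogonal_diagonalization G P n" using orthogonal_diagonalization_exists[OF G] .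
  then interpret orthogonal_diagonalization G P n .
  show ?thesis
    using card_sign_eigval_le[OF F, of "-1"] nonneg
    unfolding num_neg_eigenvalues_def sum_order_char_poly by simp
qed

lemma dim_le_num_pos_neg_eigenvalues:
  fixes G :: "real mat"
  assumes G: "G \<in> carrier_mat n n" "transpose_mat G = G" and F: "finite F" "F \<subseteq> carrier_vec n"
    and kernel: "\<And>x. x \<in> carrier_vec n \<Longrightarrow> G *\<^sub>v x = 0\<^sub>v n \<Longrightarrow> (\<forall>f\<in>F. f \<bullet> x = 0) \<Longrightarrow> x = 0\<^sub>v n"
  shows "n \<le> num_pos_eigenvalues G + num_neg_eigenvalues G + card F"
proof -
  obtain P where "orthogonal_diagonalization G P n" using orthogonal_diagonalization_exists[OF G] .
  then interpret orthogonal_diagonalization G P n .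
  have "card {k. k < n \<and> eigval k > 0} + card {k. k < n \<and> eigval k < 0} + card {k. k < n \<and> eigval k = 0} = n"
    using card_sign_partition[where X = "{..<n}" and f = eigval and c = 0] by (simp add: lessThan_def)
  moreover have "card {k. k < n \<and> eigval k = 0} \<le> card F"
    using card_zero_eigval_le[OF F kernel] .
  ultimately show ?thesis
    unfolding num_pos_eigenvalues_def num_neg_eigenvalues_def sum_order_char_poly by linarith
qed

definition weighted_outer_sum_mat :: "nat \<Rightarrow> 'i set \<Rightarrow> ('i \<Rightarrow> real) \<Rightarrow> ('i \<Rightarrow> real vec) \<Rightarrow> real mat" where
  "weighted_outer_sum_mat n I l y = mat n n (\<lambda>(a, b). \<Sum>i\<in>I. l i * y i $ a * y i $ b)"

lemma dim_weighted_outer_sum_mat [simp]: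
  "dim_row (weighted_outer_sum_mat n I l y) = n" "dim_col (weighted_outer_sum_mat n I l y) = n"
  by (simp_all add: weighted_outer_sum_mat_def)

lemma weighted_outer_sum_mat_carrier [simp]: "weighted_outer_sum_mat n I l y \<in> carrier_mat n n"
  by (rule carrier_matI) simp_all

lemma transpose_weighted_outer_sum_mat [simp]:
  "transpose_mat (weighted_outer_sum_mat n I l y) = weighted_outer_sum_mat n I l y"
proof (rule eq_matI)
  fix i j assume "i < dim_row (weighted_outer_sum_mat n I l y)" "j < dim_col (weighted_outer_sum_mat n I l y)"
  then show "transpose_mat (weighted_outer_sum_mat n I l y) $$ (i, j) = weighted_outer_sum_mat n I l y $$ (i, j)"
    by (simp add: weighted_outer_sum_mat_def) (intro sum.cong refl, simp)
qed simp_all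

context
  fixes n :: nat and I :: "'i set" and l :: "'i \<Rightarrow> real" and y :: "'i \<Rightarrow> real vec"
  assumes y: "\<And>i. i \<in> I \<Longrightarrow> y i \<in> carrier_vec n"
begin

lemma weighted_outer_sum_mult_vec:
  assumes x: "x \<in> carrier_vec n" and a: "a < n"
  shows "(weighted_outer_sum_mat n I l y *\<^sub>v x) $ a = (\<Sum>i\<in>I. l i * (y i \<bullet> x) * y i $ a)"
proof -
  have "(weighted_outer_sum_mat n I l y *\<^sub>v x) $ a = (\<Sum>b<n. (\<Sum>i\<in>I. l i * y i $ a * y i $ b) * x $ b)"
    using x a by (simp add: weighted_outer_sum_mat_def scalar_prod_def lessThan_atLeast0)
  also have "\<dots> = (\<Sum>b<n. \<Sum>i\<in>I. l i * y i $ a * (y i $ b * x $ b))"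
    by (simp only: sum_distrib_right mult.assoc)
  also have "\<dots> = (\<Sum>i\<in>I. l i * y i $ a * (\<Sum>b<n. y i $ b * x $ b))"
    by (subst sum.swap) (simp add: sum_distrib_left)
  also have "\<dots> = (\<Sum>i\<in>I. l i * (y i \<bullet> x) * y i $ a)"
    using x y by (intro sum.cong refl) (simp add: scalar_prod_def lessThan_atLeast0 mult_ac)
  finally show ?thesis .
qed

lemma weighted_outer_sum_quadratic_form:
  assumes x: "x \<in> carrier_vec n"
  shows "x \<bullet> (weighted_outer_sum_mat n I l y *\<^sub>v x) = (\<Sum>i\<in>I. l i * (y i \<bullet> x)\<^sup>2)"
proof -
  define t where "t i = y i \<bullet> x" for i
  have "weighted_outer_sum_mat n I l y *\<^sub>v x = vec n (\<lambda>a. \<Sum>i\<in>I. l i * t i * y i $ a)"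
    unfolding t_def by (rule eq_vecI) (simp_all add: weighted_outer_sum_mult_vec[OF x] del: index_mult_mat_vec)
  then have "x \<bullet> (weighted_outer_sum_mat n I l y *\<^sub>v x) = (\<Sum>a<n. \<Sum>i\<in>I. l i * t i * (y i $ a * x $ a))"
    using x by (simp add: scalar_prod_def lessThan_atLeast0 sum_distrib_left mult_ac)
  also have "\<dots> = (\<Sum>i\<in>I. l i * t i * (\<Sum>a<n. y i $ a * x $ a))"
    by (subst sum.swap) (simp add: sum_distrib_left)
  also have "\<dots> = (\<Sum>i\<in>I. l i * (t i)\<^sup>2)"
    using x y unfolding t_def by (intro sum.cong refl) (simp add: scalar_prod_def lessThan_atLeast0 power2_eq_square)
  finally show ?thesis unfolding t_def .
qed

end

lemma sum_weighted_square_shift: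
  fixes l t :: "'i \<Rightarrow> real"
  assumes "sum l I = 0" and "(\<Sum>i\<in>I. l i * t i) = 0"
  shows "(\<Sum>i\<in>I. l i * (t i - c)\<^sup>2) = (\<Sum>i\<in>I. l i * (t i)\<^sup>2)"
proof -
  have "(\<Sum>i\<in>I. l i * (t i - c)\<^sup>2) = (\<Sum>i\<in>I. l i * (t i)\<^sup>2) - 2 * c * (\<Sum>i\<in>I. l i * t i) + c\<^sup>2 * sum l I"
    by (simp add: power2_eq_square algebra_simps sum.distrib sum_subtractf sum_distrib_left)
  then show ?thesis using assms by simp
qed

section \<open>Affine independence\<close>

text \<open>Row \<open>r\<close> is \<open>(y\<^sub>r\<^sub>+\<^sub>1, 1)\<close>: the points \<open>y\<^sub>1, \<dots>, y\<^sub>n\<^sub>+\<^sub>1\<close> in homogeneous coordinates.\<close>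

definition homogeneous_coord_mat :: "nat \<Rightarrow> (nat \<Rightarrow> real vec) \<Rightarrow> real mat" where
  "homogeneous_coord_mat n y = mat (Suc n) (Suc n) (\<lambda>(r, a). if a < n then y (Suc r) $ a else 1)"

lemma det_homogeneous_coord_mat_nonzero:
  assumes aff: "affinely_independent n y {1..n+1}"
  shows "det (homogeneous_coord_mat n y) \<noteq> 0"
proof
  let ?M = "homogeneous_coord_mat n y"
  have M: "?M \<in> carrier_mat (Suc n) (Suc n)" by (simp add: homogeneous_coord_mat_def)
  assume "det ?M = 0"
  then have "det (transpose_mat ?M) = 0" using det_transpose[OF M] by simp
  then obtain c where c: "c \<in> carrier_vec (Suc n)" "c \<noteq> 0\<^sub>v (Suc n)" "transpose_mat ?M *\<^sub>v c = 0\<^sub>v (Suc n)"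
    using det_0_iff_vec_prod_zero_field[of "transpose_mat ?M" "Suc n"] M by auto
  \<comment> \<open>A vanishing combination of the rows \<open>(y\<^sub>i, 1)\<close> is an affine relation among the \<open>y\<^sub>i\<close>.\<close>
  have col_rel: "(\<Sum>r<Suc n. ?M $$ (r, a) * c $ r) = 0" if "a < Suc n" for a
    using arg_cong[OF c(3), of "\<lambda>v. v $ a"] that M c(1)
    by (simp add: scalar_prod_def lessThan_atLeast0 mult.commute)
  have "(\<Sum>i\<in>{1..n+1}. c $ (i - 1)) = 0"
    using col_rel[of n] by (simp add: sum.atLeast1_atMost_eq homogeneous_coord_mat_def)
  moreover have "(\<Sum>i\<in>{1..n+1}. c $ (i - 1) * y i $ a) = 0" if "a < n" for a
    using col_rel[of a] that
    by (simp add: sum.atLeast1_atMost_eq homogeneous_coord_mat_def mult.commute)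
  ultimately have c0: "\<forall>i\<in>{1..n+1}. c $ (i - 1) = 0"
    using aff unfolding affinely_independent_def by blast
  have "c $ r = 0" if "r < Suc n" for r
    using c0[rule_format, of "Suc r"] that by simp
  then have "c = 0\<^sub>v (Suc n)"
    using c(1) by (intro eq_vecI) auto
  with c(2) show False ..
qed

lemma affinely_independent_const_inner_eq_zero:
  assumes aff: "affinely_independent n y {1..n+1}"
    and y: "\<And>i. i \<in> {1..n+1} \<Longrightarrow> y i \<in> carrier_vec n" and x: "x \<in> carrier_vec n"
    and const: "\<And>i. i \<in> {1..n+1} \<Longrightarrow> y i \<bullet> x = t"
  shows "x = 0\<^sub>v n"
proof -
  let ?M = "homogeneous_coord_mat n y"
  define z where "z = vec (Suc n) (\<lambda>a. if a < n then x $ a else - t)"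
  have M: "?M \<in> carrier_mat (Suc n) (Suc n)" by (simp add: homogeneous_coord_mat_def)
  have "?M *\<^sub>v z = 0\<^sub>v (Suc n)"
  proof (rule eq_vecI)
    fix r assume "r < dim_vec (0\<^sub>v (Suc n) :: real vec)"
    then have r: "Suc r \<in> {1..n+1}" by simp
    have "(?M *\<^sub>v z) $ r = y (Suc r) \<bullet> x - t"
      using r M x y[OF r] by (simp add: homogeneous_coord_mat_def z_def scalar_prod_def lessThan_atLeast0)
    then show "(?M *\<^sub>v z) $ r = 0\<^sub>v (Suc n) $ r" using const[OF r] r by simp
  qed (use M in simp)
  then have z0: "z = 0\<^sub>v (Suc n)"
    using det_0_iff_vec_prod_zero_field[OF M] det_homogeneous_coord_mat_nonzero[OF aff]
    by (metis carrier_vecI dim_vec z_def)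
  have "x $ a = 0" if "a < n" for a
    using arg_cong[OF z0, of "\<lambda>v. v $ a"] that by (simp add: z_def)
  then show ?thesis
    using x by (intro eq_vecI) auto
qed

section \<open>Barycentric coordinates\<close>

locale barycentric_coordinates =
  fixes n :: nat and y :: "nat \<Rightarrow> real vec" and l :: "nat \<Rightarrow> real"
  assumes dims: "\<forall>i\<in>{0..n+1}. dim_vec (y i) = n"
    and aff: "affinely_independent n y {1..n+1}"
    and bary_sum: "(\<Sum>i\<in>{1..n+1}. l i) = 1"
    and bary_comb: "\<forall>a<n. (\<Sum>i\<in>{1..n+1}. l i * y i $ a) = y 0 $ a"
    and l0: "l 0 = -1"
begin

abbreviation G :: "real mat" where
  "G \<equiv> weighted_outer_sum_mat n {0..n+1} l y"

lemma y_carrier: "i \<in> {0..n+1} \<Longrightarrow> y i \<in> carrier_vec n"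
  using dims by (auto intro: carrier_vecI)

lemma sum_split_0: "(\<Sum>i\<in>{0..n+1}. f i) = f 0 + (\<Sum>i\<in>{1..n+1}. f i :: real)"
  using sum.atLeast_Suc_atMost[of 0 "n+1" f] by simp

lemma sum_weights: "(\<Sum>i\<in>{0..n+1}. l i) = 0"
  using sum_split_0[of l] bary_sum l0 by simp

lemma inner_affine_comb:
  assumes x: "x \<in> carrier_vec n"
  shows "(\<Sum>i\<in>{1..n+1}. l i * (y i \<bullet> x)) = y 0 \<bullet> x"
proof -
  have "(\<Sum>i\<in>{1..n+1}. l i * (y i \<bullet> x)) = (\<Sum>i\<in>{1..n+1}. \<Sum>a<n. l i * y i $ a * x $ a)"
    using x y_carrier by (intro sum.cong refl) (simp add: scalar_prod_def lessThan_atLeast0 sum_distrib_left mult.assoc)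
  also have "\<dots> = (\<Sum>a<n. (\<Sum>i\<in>{1..n+1}. l i * y i $ a) * x $ a)"
    by (subst sum.swap) (simp only: sum_distrib_right)
  also have "\<dots> = y 0 \<bullet> x"
    using x y_carrier[of 0] bary_comb by (simp add: scalar_prod_def lessThan_atLeast0)
  finally show ?thesis .
qed

lemma sum_weighted_inner:
  assumes x: "x \<in> carrier_vec n"
  shows "(\<Sum>i\<in>{0..n+1}. l i * (y i \<bullet> x)) = 0"
  using sum_split_0[of "\<lambda>i. l i * (y i \<bullet> x)"] inner_affine_comb[OF x] l0 by simp

lemma quadratic_form:
  assumes x: "x \<in> carrier_vec n"
  shows "x \<bullet> (G *\<^sub>v x) = (\<Sum>i\<in>{0..n+1}. l i * (y i \<bullet> x - c)\<^sup>2)"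
proof -
  have "x \<bullet> (G *\<^sub>v x) = (\<Sum>i\<in>{0..n+1}. l i * (y i \<bullet> x)\<^sup>2)"
    by (rule weighted_outer_sum_quadratic_form[where I = "{0..n+1}", OF y_carrier x])
  also have "\<dots> = (\<Sum>i\<in>{0..n+1}. l i * (y i \<bullet> x - c)\<^sup>2)"
    by (rule sum_weighted_square_shift[OF sum_weights sum_weighted_inner[OF x], symmetric])
  finally show ?thesis .
qed

lemma inner_eq_of_orthogonal_diffs:
  assumes J: "J \<subseteq> {0..n+1}" "i \<in> J" "j \<in> J" and x: "x \<in> carrier_vec n"
    and orth: "\<forall>f\<in>(\<lambda>i. y i - y j) ` (J - {j}). f \<bullet> x = 0"
  shows "y i \<bullet> x = y j \<bullet> x"
proof (cases "i = j")
  case False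
  then have "(y i - y j) \<bullet> x = 0" using orth J by auto
  moreover have "y i \<in> carrier_vec n" "y j \<in> carrier_vec n" using J y_carrier by auto
  ultimately show ?thesis using minus_scalar_prod_distrib[OF _ _ x] by simp
qed simp

lemma diffs_carrier: "K \<subseteq> {0..n+1} \<Longrightarrow> j \<in> {0..n+1} \<Longrightarrow> (\<lambda>i. y i - y j) ` K \<subseteq> carrier_vec n"
  using y_carrier by auto

lemma orthogonal_diffs_finite_carrier:
  assumes J: "J \<subseteq> {0..n+1}" "j \<in> J"
  shows "finite ((\<lambda>i. y i - y j) ` (J - {j}))" "(\<lambda>i. y i - y j) ` (J - {j}) \<subseteq> carrier_vec n"
proof -
  show "finite ((\<lambda>i. y i - y j) ` (J - {j}))" using finite_subset[OF J(1)] by simp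
  show "(\<lambda>i. y i - y j) ` (J - {j}) \<subseteq> carrier_vec n" using J by (intro diffs_carrier) auto
qed

lemma quadratic_form_on_orthogonal_diffs:
  assumes J: "J \<subseteq> {0..n+1}" "j \<in> J" and x: "x \<in> carrier_vec n"
    and orth: "\<forall>f\<in>(\<lambda>i. y i - y j) ` (J - {j}). f \<bullet> x = 0"
  shows "x \<bullet> (G *\<^sub>v x) = (\<Sum>i\<in>{0..n+1} - J. l i * (y i \<bullet> x - y j \<bullet> x)\<^sup>2)"
proof -
  have "x \<bullet> (G *\<^sub>v x) = (\<Sum>i\<in>{0..n+1}. l i * (y i \<bullet> x - y j \<bullet> x)\<^sup>2)"
    by (rule quadratic_form[OF x])
  also have "\<dots> = (\<Sum>i\<in>{0..n+1} - J. l i * (y i \<bullet> x - y j \<bullet> x)\<^sup>2)"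
    using inner_eq_of_orthogonal_diffs[OF J(1) _ J(2) x orth] by (intro sum.mono_neutral_right) auto
  finally show ?thesis .
qed

lemma card_orthogonal_diffs_le:
  assumes "J \<subseteq> {0..n+1}" "j \<in> J"
  shows "card ((\<lambda>i. y i - y j) ` (J - {j})) \<le> card J - 1"
  using card_image_le[of "J - {j}"] assms finite_subset[OF assms(1)] by simp

lemma pos_weight_exists: "\<exists>j\<in>{1..n+1}. l j > 0"
proof (rule ccontr)
  assume "\<not> ?thesis"
  then have "(\<Sum>i\<in>{1..n+1}. l i) \<le> 0" by (intro sum_nonpos) (simp add: not_less)
  with bary_sum show False by simp
qed

lemma num_pos_eigenvalues_le: "num_pos_eigenvalues G \<le> card {i\<in>{0..n+1}. l i > 0} - 1"
proof -
  define J where "J = {i\<in>{0..n+1}. l i > 0}"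
  obtain j where j: "j \<in> J" using pos_weight_exists unfolding J_def by auto
  have J: "J \<subseteq> {0..n+1}" unfolding J_def by auto
  have "num_pos_eigenvalues G \<le> card ((\<lambda>i. y i - y j) ` (J - {j}))"
  proof (rule num_pos_eigenvalues_le_codim[OF weighted_outer_sum_mat_carrier transpose_weighted_outer_sum_mat
        orthogonal_diffs_finite_carrier[OF J j]])
    fix x :: "real vec" assume "x \<in> carrier_vec n" "\<forall>f\<in>(\<lambda>i. y i - y j) ` (J - {j}). f \<bullet> x = 0"
    then have "x \<bullet> (G *\<^sub>v x) = (\<Sum>i\<in>{0..n+1} - J. l i * (y i \<bullet> x - y j \<bullet> x)\<^sup>2)"
      by (rule quadratic_form_on_orthogonal_diffs[OF J j])
    also have "\<dots> \<le> 0"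
      unfolding J_def by (intro sum_nonpos) (auto simp: not_less mult_nonpos_nonneg)
    finally show "x \<bullet> (G *\<^sub>v x) \<le> 0" .
  qed
  also have "\<dots> \<le> card J - 1" by (rule card_orthogonal_diffs_le[OF J j])
  finally show ?thesis unfolding J_def .
qed

lemma num_neg_eigenvalues_le: "num_neg_eigenvalues G \<le> card {i\<in>{0..n+1}. l i < 0} - 1"
proof -
  define J where "J = {i\<in>{0..n+1}. l i < 0}"
  have j: "0 \<in> J" using l0 unfolding J_def by simp
  have J: "J \<subseteq> {0..n+1}" unfolding J_def by auto
  have "num_neg_eigenvalues G \<le> card ((\<lambda>i. y i - y 0) ` (J - {0}))"
  proof (rule num_neg_eigenvalues_le_codim[OF weighted_outer_sum_mat_carrier transpose_weighted_outer_sum_mat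
        orthogonal_diffs_finite_carrier[OF J j]])
    fix x :: "real vec" assume "x \<in> carrier_vec n" "\<forall>f\<in>(\<lambda>i. y i - y 0) ` (J - {0}). f \<bullet> x = 0"
    then have "x \<bullet> (G *\<^sub>v x) = (\<Sum>i\<in>{0..n+1} - J. l i * (y i \<bullet> x - y 0 \<bullet> x)\<^sup>2)"
      by (rule quadratic_form_on_orthogonal_diffs[OF J j])
    also have "\<dots> \<ge> 0"
      unfolding J_def by (intro sum_nonneg) (auto simp: not_less)
    finally show "x \<bullet> (G *\<^sub>v x) \<ge> 0" .
  qed
  also have "\<dots> \<le> card J - 1" by (rule card_orthogonal_diffs_le[OF J j])
  finally show ?thesis unfolding J_def .
qed

lemma kernel_weights_vanish:
  assumes x: "x \<in> carrier_vec n" and Gx: "G *\<^sub>v x = 0\<^sub>v n"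
  shows "\<forall>i\<in>{1..n+1}. l i * (y i \<bullet> x - y 0 \<bullet> x) = 0"
proof -
  \<comment> \<open>\<open>G x = 0\<close> says that the weights \<open>l\<^sub>i (y\<^sub>i - y\<^sub>0) \<cdot> x\<close> form an affine relation among \<open>y\<^sub>1, \<dots>, y\<^sub>n\<^sub>+\<^sub>1\<close>.\<close>
  define c where "c i = l i * (y i \<bullet> x - y 0 \<bullet> x)" for i
  have "(\<Sum>i\<in>{1..n+1}. c i) = (\<Sum>i\<in>{1..n+1}. l i * (y i \<bullet> x)) - (\<Sum>i\<in>{1..n+1}. l i) * (y 0 \<bullet> x)"
    unfolding c_def by (simp only: right_diff_distrib sum_subtractf sum_distrib_right)
  then have "(\<Sum>i\<in>{1..n+1}. c i) = 0"
    using inner_affine_comb[OF x] bary_sum by simp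
  moreover have "(\<Sum>i\<in>{1..n+1}. c i * y i $ a) = 0" if a: "a < n" for a
  proof -
    have "(\<Sum>i\<in>{1..n+1}. c i * y i $ a)
        = (\<Sum>i\<in>{1..n+1}. l i * (y i \<bullet> x) * y i $ a) - (y 0 \<bullet> x) * (\<Sum>i\<in>{1..n+1}. l i * y i $ a)"
      unfolding c_def
      by (simp only: right_diff_distrib left_diff_distrib sum_subtractf sum_distrib_left, simp only: mult_ac)
    also have "(\<Sum>i\<in>{1..n+1}. l i * y i $ a) = y 0 $ a" using bary_comb a by simp
    also have "(\<Sum>i\<in>{1..n+1}. l i * (y i \<bullet> x) * y i $ a) = (y 0 \<bullet> x) * y 0 $ a"
    proof -
      have "(\<Sum>i\<in>{0..n+1}. l i * (y i \<bullet> x) * y i $ a) = 0"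
        using arg_cong[OF Gx, of "\<lambda>v. v $ a"] weighted_outer_sum_mult_vec[where I = "{0..n+1}", OF y_carrier x a]
          a by simp
      then show ?thesis using sum_split_0[of "\<lambda>i. l i * (y i \<bullet> x) * y i $ a"] l0 by simp
    qed
    finally show ?thesis by simp
  qed
  ultimately show ?thesis
    using aff unfolding affinely_independent_def c_def by blast
qed

lemma kernel_orthogonal_diffs_eq_zero:
  assumes x: "x \<in> carrier_vec n" and Gx: "G *\<^sub>v x = 0\<^sub>v n"
    and orth: "\<forall>f\<in>(\<lambda>i. y i - y 0) ` {i\<in>{0..n+1}. l i = 0}. f \<bullet> x = 0"
  shows "x = 0\<^sub>v n"
proof -
  have const: "y i \<bullet> x = y 0 \<bullet> x" if i: "i \<in> {1..n+1}" for i
  proof (cases "l i = 0")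
    case True
    then have "(y i - y 0) \<bullet> x = 0" using orth i by auto
    moreover have "y i \<in> carrier_vec n" "y 0 \<in> carrier_vec n" using i y_carrier by auto
    ultimately show ?thesis using minus_scalar_prod_distrib[OF _ _ x] by simp
  next
    case False
    then show ?thesis using kernel_weights_vanish[OF x Gx] i by auto
  qed
  show ?thesis
    by (rule affinely_independent_const_inner_eq_zero[OF aff _ x const]) (simp add: y_carrier)
qed

lemma dim_le_num_pos_neg_eigenvalues_zero_weights:
  "n \<le> num_pos_eigenvalues G + num_neg_eigenvalues G + card {i\<in>{0..n+1}. l i = 0}"
proof -
  have carrier: "(\<lambda>i. y i - y 0) ` {i\<in>{0..n+1}. l i = 0} \<subseteq> carrier_vec n"
    by (rule diffs_carrier) auto
  have "n \<le> num_pos_eigenvalues G + num_neg_eigenvalues G + card ((\<lambda>i. y i - y 0) ` {i\<in>{0..n+1}. l i = 0})"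
    by (rule dim_le_num_pos_neg_eigenvalues[OF weighted_outer_sum_mat_carrier transpose_weighted_outer_sum_mat
          _ carrier kernel_orthogonal_diffs_eq_zero]) simp
  also have "card ((\<lambda>i. y i - y 0) ` {i\<in>{0..n+1}. l i = 0}) \<le> card {i\<in>{0..n+1}. l i = 0}"
    by (rule card_image_le) simp
  finally show ?thesis by simp
qed

end

theorem lemma4p1:
  fixes n :: nat and y :: "nat \<Rightarrow> real vec" and l :: "nat \<Rightarrow> real"
  assumes dims: "\<forall>i\<in>{0..n+1}. dim_vec (y i) = n"
    and inj: "inj_on y {1..n+1}"
    and aff: "affinely_independent n y {1..n+1}"
    and bary_sum: "(\<Sum>i\<in>{1..n+1}. l i) = 1"
    and bary_comb: "\<forall>a<n. (\<Sum>i\<in>{1..n+1}. l i * y i $ a) = y 0 $ a"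
    and l0: "l 0 = -1"
  shows "num_pos_eigenvalues (mat n n (\<lambda>(a, b). \<Sum>i\<in>{0..n+1}. l i * y i $ a * y i $ b))
           = card {i\<in>{0..n+1}. l i > 0} - 1
       \<and> num_neg_eigenvalues (mat n n (\<lambda>(a, b). \<Sum>i\<in>{0..n+1}. l i * y i $ a * y i $ b))
           = card {i\<in>{0..n+1}. l i < 0} - 1"
proof -
  interpret barycentric_coordinates n y l
    using dims aff bary_sum bary_comb l0 by unfold_locales
  let ?Ipos = "{i\<in>{0..n+1}. l i > 0}" and ?Ineg = "{i\<in>{0..n+1}. l i < 0}"
  have "card ?Ipos + card ?Ineg + card {i\<in>{0..n+1}. l i = 0} = n + 2"
    using card_sign_partition[where X = "{0..n+1}" and f = l and c = 0] by simp
  moreover have "card ?Ipos \<ge> 1" "card ?Ineg \<ge> 1"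
    using pos_weight_exists l0 by (auto simp: Suc_le_eq card_gt_0_iff)
  ultimately have "num_pos_eigenvalues G = card ?Ipos - 1 \<and> num_neg_eigenvalues G = card ?Ineg - 1"
    using num_pos_eigenvalues_le num_neg_eigenvalues_le dim_le_num_pos_neg_eigenvalues_zero_weights
    by linarith
  then show ?thesis unfolding weighted_outer_sum_mat_def .
qed

end
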